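(* Let $\phi\colon P(\mathbb{R})\to P(\mathbb{R})$ be a surjective isometry with respect to the Kuiper distance, and let $f\colon\mathbb{R}\to\mathbb{R}$ be a bijection such that $\phi(\mu)(\{f(x)\})=\mu(\{x\})$ for all $\mu\in P(\mathbb{R})$ and $x\in\mathbb{R}$ (equivalently, $\phi(\delta_x)=\delta_{f(x)}$ for all $x$). Then $f$ is a homeomorphism of $\mathbb{R}$ (i.e. a monotone bijection).
   Context: $P(\mathbb{R})$ is the set of Borel probability measures on $\mathbb{R}$, with the Kuiper distance $d_{Ku}(\mu,\nu)=\sup\{|\mu(I)-\nu(I)| : I\text{ a non-degenerate interval of }\mathbb{R}\}$. $\delta_x$ denotes the Dirac measure at $x$. *)

theory Defs
  imports "HOL-Probability.Probability"
begin

definition Prob_R :: "real measure set" where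
  "Prob_R = {M. sets M = sets borel \<and> prob_space M}"

definition nondeg_interval :: "real set \<Rightarrow> bool" where
  "nondeg_interval I \<longleftrightarrow> is_interval I \<and> (\<exists>a b. a \<in> I \<and> b \<in> I \<and> a < b)"

definition kuiper_dist :: "real measure \<Rightarrow> real measure \<Rightarrow> real" where
  "kuiper_dist \<mu> \<nu> = (SUP I \<in> {I. nondeg_interval I}. \<bar>measure \<mu> I - measure \<nu> I\<bar>)"

end

theory Submission
  imports Defs
begin

text \<open>The uniform measures on two pairs \<open>{a, b}\<close> and \<open>{c, d}\<close> of distinct points are at
  Kuiper distance at most \<open>1/2\<close> if the pairs interleave and at least \<open>1\<close> otherwise, since an
  interval containing one pair misses the other exactly in the latter case. As \<open>\<phi>\<close> moves these
  measures along \<open>f\<close>, the bijection \<open>f\<close> maps interleaving pairs to interleaving pairs. By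
  completeness of \<open>\<real>\<close> such a bijection preserves strict betweenness, so it is strictly monotone
  or strictly antitone, and hence a homeomorphism.\<close>

section \<open>Separation of pairs of points\<close>

definition strictly_between :: "'a::linorder \<Rightarrow> 'a \<Rightarrow> 'a \<Rightarrow> bool" where
  "strictly_between a x b \<longleftrightarrow> a < x \<and> x < b \<or> b < x \<and> x < a"

definition separates :: "'a::linorder \<Rightarrow> 'a \<Rightarrow> 'a \<Rightarrow> 'a \<Rightarrow> bool" where
  "separates a b c d \<longleftrightarrow> strictly_between a c b \<noteq> strictly_between a d b"

definition preserves_separation :: "('a::linorder \<Rightarrow> 'b::linorder) \<Rightarrow> bool" where
  "preserves_separation f \<longleftrightarrow>
     (\<forall>a b c d. distinct [a, b, c, d] \<longrightarrow> separates a b c d \<longrightarrow> separates (f a) (f b) (f c) (f d))"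

lemma preserves_separationD:
  "preserves_separation f \<Longrightarrow> distinct [a, b, c, d] \<Longrightarrow> separates a b c d
    \<Longrightarrow> separates (f a) (f b) (f c) (f d)"
  unfolding preserves_separation_def by blast

lemma separates_commute:
  "distinct [a, b, c, d] \<Longrightarrow> separates a b c d \<Longrightarrow> separates c d a b"
  unfolding separates_def strictly_between_def by auto

lemma preserves_separation_uminus:
  fixes f :: "'a::linorder \<Rightarrow> 'b::linordered_ab_group_add"
  shows "preserves_separation f \<Longrightarrow> preserves_separation (\<lambda>x. - f x)"
  unfolding preserves_separation_def separates_def strictly_between_def by (metis neg_less_iff_less)

lemma strictly_between_uminus [simp]:
  fixes a x b :: "'a::linordered_ab_group_add"
  shows "strictly_between (- a) (- x) (- b) \<longleftrightarrow> strictly_between a x b"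
  unfolding strictly_between_def by auto

text \<open>The completeness of \<open>\<real>\<close> enters here: \<open>Sup N\<close> is the largest element of \<open>N\<close> or the
  smallest of \<open>P\<close>, whose image would be the least value of \<open>f\<close> on \<open>N\<close> or the greatest on \<open>P\<close>.\<close>

lemma no_strict_antimono_cut_onto_rays:
  fixes f :: "real \<Rightarrow> real"
  assumes "is_interval (N \<union> P)" and N_less_P: "\<And>u v. u \<in> N \<Longrightarrow> v \<in> P \<Longrightarrow> u < v"
    and N_antimono: "strict_antimono_on N f" and P_antimono: "strict_antimono_on P f"
    and N_onto: "{..<\<alpha>} \<subseteq> f ` N" and P_onto: "{\<beta><..} \<subseteq> f ` P"
  shows False
proof -
  have "\<alpha> - 1 \<in> f ` N" "\<beta> + 1 \<in> f ` P" using N_onto P_onto by auto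
  then obtain n p where "n \<in> N" "p \<in> P" by blast
  define c where "c = Sup N"
  have "bdd_above N" using \<open>p \<in> P\<close> N_less_P by (auto simp: bdd_above_def intro: less_imp_le)
  hence c_upper: "u \<le> c" if "u \<in> N" for u using that by (simp add: c_def cSup_upper)
  have c_lower: "c \<le> v" if "v \<in> P" for v
    unfolding c_def using \<open>n \<in> N\<close> N_less_P that by (intro cSup_least) (auto intro: less_imp_le)
  have "c \<in> N \<union> P"
    using \<open>is_interval (N \<union> P)\<close> c_upper[OF \<open>n \<in> N\<close>] c_lower[OF \<open>p \<in> P\<close>] \<open>n \<in> N\<close> \<open>p \<in> P\<close>
    unfolding is_interval_1 by (metis Un_iff)
  thus False
  proof
    assume "c \<in> N"
    have "min (f c) \<alpha> - 1 \<in> f ` N" using N_onto by auto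
    then obtain u where u: "u \<in> N" "f u = min (f c) \<alpha> - 1" by auto
    hence "u < c" using c_upper[of u] by (cases "u = c") auto
    hence "f c < f u" using N_antimono u(1) \<open>c \<in> N\<close> by (simp add: monotone_on_def)
    with u(2) show False by linarith
  next
    assume "c \<in> P"
    have "max (f c) \<beta> + 1 \<in> f ` P" using P_onto by auto
    then obtain v where v: "v \<in> P" "f v = max (f c) \<beta> + 1" by auto
    hence "c < v" using c_lower[of v] by (cases "v = c") auto
    hence "f v < f c" using P_antimono v(1) \<open>c \<in> P\<close> by (simp add: monotone_on_def)
    with v(2) show False by linarith
  qed
qed

lemma preserves_separation_not_inside_out:
  fixes f :: "real \<Rightarrow> real"
  assumes surj: "surj f" and sep: "preserves_separation f"
    and "f x < f z"
    and inside: "\<And>u. x < u \<Longrightarrow> u < z \<Longrightarrow> f u < f x \<or> f z < f u"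
    and outside: "\<And>w. w < x \<or> z < w \<Longrightarrow> f x < f w \<and> f w < f z"
  shows False
proof -
  define N where "N = {u. x < u \<and> u < z \<and> f u < f x}"
  define P where "P = {u. x < u \<and> u < z \<and> f z < f u}"
  have preimage_inside: "x < u \<and> u < z" if "f u < f x \<or> f z < f u" for u
    using outside[of u] that \<open>f x < f z\<close>
    by (cases x u rule: linorder_cases; cases u z rule: linorder_cases) auto
  have "N \<union> P = {x<..<z}" by (auto simp: N_def P_def dest: inside)
  moreover have "u < v" if "u \<in> N" "v \<in> P" for u v
  proof (rule ccontr)
    assume "\<not> u < v"
    moreover have "u \<noteq> v" using that \<open>f x < f z\<close> by (auto simp: N_def P_def)
    ultimately have "separates (f x) (f u) (f v) (f z)"
      using that by (intro preserves_separationD[OF sep])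
        (auto simp: N_def P_def separates_def strictly_between_def)
    thus False using that \<open>f x < f z\<close> by (auto simp: N_def P_def separates_def strictly_between_def)
  qed
  moreover have "strict_antimono_on N f"
  proof (intro monotone_onI)
    fix u v assume "u \<in> N" "v \<in> N" "u < v"
    hence "separates (f x) (f v) (f u) (f z)"
      by (intro preserves_separationD[OF sep]) (auto simp: N_def separates_def strictly_between_def)
    thus "f v < f u"
      using \<open>u \<in> N\<close> \<open>v \<in> N\<close> \<open>f x < f z\<close> by (auto simp: N_def separates_def strictly_between_def)
  qed
  moreover have "strict_antimono_on P f"
  proof (intro monotone_onI)
    fix u v assume "u \<in> P" "v \<in> P" "u < v"
    hence "separates (f u) (f z) (f v) (f x)"
      by (intro preserves_separationD[OF sep]) (auto simp: P_def separates_def strictly_between_def)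
    thus "f v < f u"
      using \<open>u \<in> P\<close> \<open>v \<in> P\<close> \<open>f x < f z\<close> by (auto simp: P_def separates_def strictly_between_def)
  qed
  moreover have "{..<f x} \<subseteq> f ` N"
  proof
    fix v assume "v \<in> {..<f x}"
    moreover obtain u where "v = f u" using surj by (metis surjD)
    ultimately show "v \<in> f ` N" using preimage_inside[of u] by (auto simp: N_def)
  qed
  moreover have "{f z<..} \<subseteq> f ` P"
  proof
    fix v assume "v \<in> {f z<..}"
    moreover obtain u where "v = f u" using surj by (metis surjD)
    ultimately show "v \<in> f ` P" using preimage_inside[of u] by (auto simp: P_def)
  qed
  ultimately show False by (intro no_strict_antimono_cut_onto_rays[of N P f]) auto
qed

lemma preserves_separation_strictly_between:
  fixes f :: "real \<Rightarrow> real"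
  assumes "bij f" "preserves_separation f" "x < y" "y < z"
  shows "strictly_between (f x) (f y) (f z)"
proof -
  have increasing_case: "strictly_between (g x) (g y) (g z)"
    if "bij g" "preserves_separation g" "g x < g z" for g :: "real \<Rightarrow> real"
  proof (rule ccontr)
    assume not_between: "\<not> strictly_between (g x) (g y) (g z)"
    have outside: "g x < g w \<and> g w < g z" if "w < x \<or> z < w" for w
    proof -
      have "separates (g x) (g z) (g y) (g w)"
        using that \<open>x < y\<close> \<open>y < z\<close> by (intro preserves_separationD[OF \<open>preserves_separation g\<close>])
          (auto simp: separates_def strictly_between_def)
      thus ?thesis using not_between \<open>g x < g z\<close> by (auto simp: separates_def strictly_between_def)
    qed
    have inside: "g u < g x \<or> g z < g u" if "x < u" "u < z" for u
    proof -
      have "separates (g x) (g z) (g u) (g (z + 1))"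
        using that by (intro preserves_separationD[OF \<open>preserves_separation g\<close>])
          (auto simp: separates_def strictly_between_def)
      moreover have "g u \<noteq> g x" "g u \<noteq> g z"
        using that bij_is_inj[OF \<open>bij g\<close>] by (auto dest: injD)
      ultimately show ?thesis using outside[of "z + 1"] by (auto simp: separates_def strictly_between_def)
    qed
    show False
      by (rule preserves_separation_not_inside_out[OF bij_is_surj[OF \<open>bij g\<close>]
          \<open>preserves_separation g\<close> \<open>g x < g z\<close> inside outside])
  qed
  have "f x \<noteq> f z"
    using \<open>x < y\<close> \<open>y < z\<close> bij_is_inj[OF \<open>bij f\<close>] by (metis injD less_irrefl order.strict_trans)
  show ?thesis
  proof (cases "f x < f z")
    case True
    with increasing_case assms(1,2) show ?thesis .
  next
    case False
    with \<open>f x \<noteq> f z\<close> have "- f x < - f z" by simp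
    moreover have "bij (\<lambda>x. - f x)"
      using bij_comp[OF \<open>bij f\<close> bij_uminus] by (simp add: comp_def)
    ultimately show ?thesis
      using increasing_case[of "\<lambda>x. - f x"] preserves_separation_uminus[OF assms(2)] by simp
  qed
qed

section \<open>Monotone bijections of the line\<close>

lemma strictly_between_preserving_strict_mono_or_antimono:
  fixes f :: "'a::{linorder, no_bot, no_top} \<Rightarrow> 'b::linorder"
  assumes between: "\<And>x y z. x < y \<Longrightarrow> y < z \<Longrightarrow> strictly_between (f x) (f y) (f z)"
  shows "strict_mono f \<or> strict_antimono_on UNIV f"
proof -
  have same_direction: "f a < f b \<longleftrightarrow> f c < f d" if "a < b" "c < d" for a b c d
  proof -
    obtain s where "s < a" "s < c" using lt_ex[of "min a c"] by auto
    obtain e where "b < e" "d < e" using gt_ex[of "max b d"] by auto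
    with that have "a < e" "c < e" by (auto intro: less_trans)
    have "f a < f b \<longleftrightarrow> f a < f e" "f c < f d \<longleftrightarrow> f c < f e"
      using between[of a b e] between[of c d e] that \<open>b < e\<close> \<open>d < e\<close>
      by (auto simp: strictly_between_def)
    moreover have "f a < f e \<longleftrightarrow> f s < f e" "f c < f e \<longleftrightarrow> f s < f e"
      using between[of s a e] between[of s c e] \<open>s < a\<close> \<open>s < c\<close> \<open>a < e\<close> \<open>c < e\<close>
      by (auto simp: strictly_between_def)
    ultimately show ?thesis by simp
  qed
  have injective: "f a \<noteq> f b" if "a < b" for a b
  proof -
    obtain c where "b < c" using gt_ex by blast
    with between[of a b c] that show ?thesis by (auto simp: strictly_between_def)
  qed
  obtain a b :: 'a where "a < b" using lt_ex by blast
  show ?thesis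
  proof (cases "f a < f b")
    case True
    hence "strict_mono f" using same_direction[OF _ \<open>a < b\<close>] by (simp add: strict_mono_def)
    thus ?thesis ..
  next
    case False
    have "f y < f x" if "x < y" for x y
      using same_direction[OF that \<open>a < b\<close>] injective[OF that] False by simp
    hence "strict_antimono_on UNIV f" by (simp add: monotone_on_def)
    thus ?thesis ..
  qed
qed

lemma homeomorphism_strict_mono_surj:
  fixes f :: "'a::{linorder_topology, dense_order} \<Rightarrow> 'b::{linorder_topology, dense_order}"
  assumes mono: "strict_mono f" and surj: "surj f"
  shows "homeomorphism UNIV UNIV f (inv f)"
proof -
  have inj: "inj f" using strict_mono_imp_inj_on[OF mono] .
  have inv_mono: "strict_mono (inv f)"
  proof (rule strict_monoI)
    fix x y :: 'b
    assume "x < y"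
    hence "f (inv f x) < f (inv f y)" by (simp add: surj_f_inv_f[OF surj])
    thus "inv f x < inv f y" by (simp add: strict_mono_less[OF mono])
  qed
  have inv_surj: "surj (inv f)" using inj by (rule inj_imp_surj_inv)
  have "continuous_on UNIV f"
    by (rule continuous_onI_mono) (simp_all add: surj strict_mono_less_eq[OF mono])
  moreover have "continuous_on UNIV (inv f)"
    by (rule continuous_onI_mono) (simp_all add: inv_surj strict_mono_less_eq[OF inv_mono])
  ultimately show ?thesis
    by (intro homeomorphismI) (simp_all add: surj inv_surj inv_f_f[OF inj] surj_f_inv_f[OF surj])
qed

lemma homeomorphism_strict_mono_or_antimono_surj:
  fixes f :: "real \<Rightarrow> real"
  assumes "strict_mono f \<or> strict_antimono_on UNIV f" "surj f"
  shows "\<exists>g. homeomorphism UNIV UNIV f g"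
  using assms(1)
proof
  assume "strict_mono f"
  thus ?thesis using homeomorphism_strict_mono_surj assms(2) by blast
next
  assume "strict_antimono_on UNIV f"
  hence "strict_mono (uminus \<circ> f)" by (simp add: strict_mono_def monotone_on_def)
  moreover have "surj (uminus \<circ> f)"
    using assms(2) bij_is_surj[OF bij_uminus] by (rule comp_surj)
  ultimately have "homeomorphism UNIV UNIV (uminus \<circ> f) (inv (uminus \<circ> f))"
    by (rule homeomorphism_strict_mono_surj)
  moreover have "homeomorphism UNIV UNIV uminus (uminus :: real \<Rightarrow> real)"
    by (rule homeomorphismI) (simp_all add: continuous_on_minus continuous_on_id)
  ultimately have "homeomorphism UNIV UNIV (uminus \<circ> (uminus \<circ> f)) (inv (uminus \<circ> f) \<circ> uminus)"
    by (rule homeomorphism_compose)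
  thus ?thesis by (auto simp: comp_def)
qed

section \<open>Kuiper distance between two-point measures\<close>

lemma measure_two_half_atoms:
  assumes "prob_space M" "p \<noteq> q" "{p} \<in> sets M" "{q} \<in> sets M"
    and "measure M {p} = 1/2" "measure M {q} = 1/2" "I \<in> sets M"
  shows "measure M I = (indicator I p + indicator I q) / 2"
proof -
  interpret prob_space M by fact
  have pq: "{p, q} \<in> sets M" using assms(3,4) by (metis insert_is_Un sets.Un)
  have "measure M {p, q} = 1"
    using finite_measure_eq_sum_singleton[of "{p, q}"] assms(2-6) by auto
  hence "AE x in M. x \<in> {p, q}" using prob_eq_1[OF pq] by simp
  hence "measure M I = measure M (I \<inter> {p, q})"
    using pq assms(7) by (intro measure_eq_AE) auto
  also have "\<dots> = (\<Sum>x\<in>I \<inter> {p, q}. measure M {x})"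
    using assms(3,4) by (intro finite_measure_eq_sum_singleton) auto
  also have "\<dots> = (indicator I p + indicator I q) / 2"
    using assms(2,5,6) by (cases "p \<in> I"; cases "q \<in> I") (auto simp: Int_insert_right)
  finally show ?thesis .
qed

lemma nondeg_interval_atLeastAtMost: "a < b \<Longrightarrow> nondeg_interval {a..b}"
  unfolding nondeg_interval_def by (metis atLeastAtMost_iff is_interval_cc order_refl less_imp_le)

lemma strictly_between_mem_interval:
  fixes I :: "real set"
  shows "is_interval I \<Longrightarrow> a \<in> I \<Longrightarrow> b \<in> I \<Longrightarrow> strictly_between a x b \<Longrightarrow> x \<in> I"
  unfolding is_interval_1 strictly_between_def by (meson less_imp_le)

lemma kuiper_dist_le:
  assumes "\<And>I. nondeg_interval I \<Longrightarrow> \<bar>measure \<mu> I - measure \<nu> I\<bar> \<le> c"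
  shows "kuiper_dist \<mu> \<nu> \<le> c"
proof -
  have "nondeg_interval (UNIV :: real set)"
    unfolding nondeg_interval_def by (metis UNIV_I is_interval_univ zero_less_one)
  thus ?thesis unfolding kuiper_dist_def using assms by (intro cSUP_least) auto
qed

lemma abs_measure_diff_le_kuiper_dist:
  assumes "\<mu> \<in> Prob_R" "\<nu> \<in> Prob_R" "nondeg_interval I"
  shows "\<bar>measure \<mu> I - measure \<nu> I\<bar> \<le> kuiper_dist \<mu> \<nu>"
proof -
  interpret \<mu>: prob_space \<mu> using assms(1) by (simp add: Prob_R_def)
  interpret \<nu>: prob_space \<nu> using assms(2) by (simp add: Prob_R_def)
  have "\<bar>measure \<mu> J - measure \<nu> J\<bar> \<le> 1" for J
    using \<mu>.prob_le_1[of J] \<nu>.prob_le_1[of J] measure_nonneg[of \<mu> J] measure_nonneg[of \<nu> J]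
    by linarith
  hence "bdd_above ((\<lambda>J. \<bar>measure \<mu> J - measure \<nu> J\<bar>) ` {J. nondeg_interval J})"
    by (intro bdd_aboveI2)
  thus ?thesis unfolding kuiper_dist_def using assms(3) by (intro cSUP_upper) auto
qed

lemma kuiper_dist_two_atoms_separated:
  assumes "\<And>I. nondeg_interval I \<Longrightarrow> measure \<mu> I = (indicator I p + indicator I q) / 2"
    and "\<And>I. nondeg_interval I \<Longrightarrow> measure \<nu> I = (indicator I r + indicator I s) / 2"
    and "distinct [p, q, r, s]" "separates p q r s"
  shows "kuiper_dist \<mu> \<nu> \<le> 1/2"
proof (rule kuiper_dist_le)
  fix I :: "real set"
  assume I: "nondeg_interval I"
  hence "is_interval I" by (simp add: nondeg_interval_def)
  have "separates r s p q" using assms(3,4) by (rule separates_commute)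
  hence "p \<in> I \<Longrightarrow> q \<in> I \<Longrightarrow> r \<in> I \<or> s \<in> I" "r \<in> I \<Longrightarrow> s \<in> I \<Longrightarrow> p \<in> I \<or> q \<in> I"
    using assms(4) strictly_between_mem_interval[OF \<open>is_interval I\<close>] unfolding separates_def
    by metis+
  thus "\<bar>measure \<mu> I - measure \<nu> I\<bar> \<le> 1/2"
    unfolding assms(1,2)[OF I] by (simp split: split_indicator) blast
qed

lemma kuiper_dist_two_atoms_not_separated:
  assumes "\<mu> \<in> Prob_R" "\<nu> \<in> Prob_R"
    and "\<And>I. nondeg_interval I \<Longrightarrow> measure \<mu> I = (indicator I p + indicator I q) / 2"
    and "\<And>I. nondeg_interval I \<Longrightarrow> measure \<nu> I = (indicator I r + indicator I s) / 2"
    and "distinct [p, q, r, s]" "\<not> separates p q r s"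
  shows "1 \<le> kuiper_dist \<mu> \<nu>"
proof -
  txt \<open>Either both of \<open>r, s\<close> lie strictly between \<open>p\<close> and \<open>q\<close>, or none does; the closed
    interval spanned by the inner pair then misses the outer pair.\<close>
  obtain I where "nondeg_interval I" "\<bar>measure \<mu> I - measure \<nu> I\<bar> = 1"
  proof (cases "strictly_between p r q")
    case False
    hence "\<not> strictly_between p s q" using assms(6) by (simp add: separates_def)
    with False assms(5) have "r \<notin> {min p q..max p q}" "s \<notin> {min p q..max p q}"
      by (auto simp: strictly_between_def)
    moreover have I: "nondeg_interval {min p q..max p q}"
      using assms(5) by (intro nondeg_interval_atLeastAtMost) auto
    ultimately show ?thesis using that[OF I] assms(3,4)[OF I] by simp
  next
    case True
    hence "strictly_between p s q" using assms(6) by (simp add: separates_def)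
    with True assms(5) have "p \<notin> {min r s..max r s}" "q \<notin> {min r s..max r s}"
      by (auto simp: strictly_between_def)
    moreover have I: "nondeg_interval {min r s..max r s}"
      using assms(5) by (intro nondeg_interval_atLeastAtMost) auto
    ultimately show ?thesis using that[OF I] assms(3,4)[OF I] by simp
  qed
  thus ?thesis using abs_measure_diff_le_kuiper_dist[OF assms(1,2)] by metis
qed

definition two_point_measure :: "real \<Rightarrow> real \<Rightarrow> real measure" where
  "two_point_measure a b = distr (measure_pmf (pmf_of_set {a, b})) borel (\<lambda>x. x)"

lemma two_point_measure_Prob_R: "two_point_measure a b \<in> Prob_R"
  unfolding Prob_R_def two_point_measure_def
  by (auto intro!: prob_space.prob_space_distr simp: measure_pmf.prob_space_axioms)

lemma measure_two_point_measure_singleton: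
  assumes "a \<noteq> b"
  shows "measure (two_point_measure a b) {a} = 1/2" "measure (two_point_measure a b) {b} = 1/2"
  using assms by (auto simp: two_point_measure_def measure_distr measure_pmf_of_set)

lemma measure_interval_two_half_atoms:
  assumes "\<mu> \<in> Prob_R" "a \<noteq> b" "measure \<mu> {a} = 1/2" "measure \<mu> {b} = 1/2" "nondeg_interval I"
  shows "measure \<mu> I = (indicator I a + indicator I b) / 2"
  using assms real_interval_borel_measurable[of I]
  by (intro measure_two_half_atoms) (auto simp: Prob_R_def nondeg_interval_def)

lemma kuiper_isometry_preserves_separation:
  fixes \<phi> :: "real measure \<Rightarrow> real measure" and f :: "real \<Rightarrow> real"
  assumes into: "\<And>\<mu>. \<mu> \<in> Prob_R \<Longrightarrow> \<phi> \<mu> \<in> Prob_R"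
    and isometry: "\<And>\<mu> \<nu>. \<mu> \<in> Prob_R \<Longrightarrow> \<nu> \<in> Prob_R \<Longrightarrow> kuiper_dist (\<phi> \<mu>) (\<phi> \<nu>) = kuiper_dist \<mu> \<nu>"
    and atoms: "\<And>\<mu> x. \<mu> \<in> Prob_R \<Longrightarrow> measure (\<phi> \<mu>) {f x} = measure \<mu> {x}"
    and "inj f"
  shows "preserves_separation f"
  unfolding preserves_separation_def
proof (intro allI impI)
  fix a b c d :: real
  assume distinct: "distinct [a, b, c, d]" and separated: "separates a b c d"
  let ?U = two_point_measure
  have "kuiper_dist (?U a b) (?U c d) \<le> 1/2"
    using distinct separated
    by (intro kuiper_dist_two_atoms_separated measure_interval_two_half_atoms
        two_point_measure_Prob_R) (auto simp: measure_two_point_measure_singleton)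
  hence close: "kuiper_dist (\<phi> (?U a b)) (\<phi> (?U c d)) \<le> 1/2"
    by (simp add: isometry two_point_measure_Prob_R)
  have image_atoms: "measure (\<phi> (?U x y)) {f x} = 1/2" "measure (\<phi> (?U x y)) {f y} = 1/2"
    if "x \<noteq> y" for x y
    using that by (simp_all add: atoms two_point_measure_Prob_R measure_two_point_measure_singleton)
  have "distinct [f a, f b, f c, f d]" using distinct \<open>inj f\<close> by (auto dest: injD)
  show "separates (f a) (f b) (f c) (f d)"
  proof (rule ccontr)
    assume "\<not> separates (f a) (f b) (f c) (f d)"
    with \<open>distinct [f a, f b, f c, f d]\<close> have "1 \<le> kuiper_dist (\<phi> (?U a b)) (\<phi> (?U c d))"
      using distinct by (intro kuiper_dist_two_atoms_not_separated into two_point_measure_Prob_R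
          measure_interval_two_half_atoms) (auto simp: image_atoms)
    with close show False by simp
  qed
qed

theorem lemma3p4:
  fixes \<phi> :: "real measure \<Rightarrow> real measure" and f :: "real \<Rightarrow> real"
  assumes "\<phi> ` Prob_R = Prob_R"
    and "\<forall>\<mu>\<in>Prob_R. \<forall>\<nu>\<in>Prob_R. kuiper_dist (\<phi> \<mu>) (\<phi> \<nu>) = kuiper_dist \<mu> \<nu>"
    and "bij f"
    and "\<forall>\<mu>\<in>Prob_R. \<forall>x. measure (\<phi> \<mu>) {f x} = measure \<mu> {x}"
  shows "\<exists>g. homeomorphism UNIV UNIV f g"
proof -
  have "preserves_separation f"
    using assms by (intro kuiper_isometry_preserves_separation[of \<phi>]) (auto simp: bij_is_inj)
  hence "strict_mono f \<or> strict_antimono_on UNIV f"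
    using preserves_separation_strictly_between \<open>bij f\<close>
    by (intro strictly_between_preserving_strict_mono_or_antimono)
  thus ?thesis using \<open>bij f\<close> by (intro homeomorphism_strict_mono_or_antimono_surj bij_is_surj)
qed

end
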